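(* In the setting described in the context, define $$\mathcal{H}=(\mathcal{Q}+Q)^{\theta}_{(0)}-(\mathcal{P}+P)^{\theta}_{(0)}-pnl.$$ Then $\mathrm{HVA}=va(\mathcal{H}+K^{\theta})$, where $K$ is the drift of $\mathcal{Q}+Q$.
   Context: Let $(\Omega,\mathcal{A},\mathbb{Q})$ be a probability space with a filtration $\mathfrak{F}=(\mathfrak{F}_t)_{0\le t\le T}$ satisfying the usual conditions; $\mathbb{E}_t$ is conditional expectation given $\mathfrak{F}_t$. All processes are adapted, càdlàg, and integrable enough for the conditional expectations below to exist. For an integrable adapted process $X$, $va(X)_t=\mathbb{E}_t[X_T-X_t]$. A cash flow is an optional integrable process $\mathcal{Y}$ with $\mathcal{Y}_0=0$; its fair callable value is $\widetilde{va}(\mathcal{Y})_t=\sup_{\tau\in\mathcal{T}^t}\mathbb{E}_t[\mathcal{Y}_\tau-\mathcal{Y}_t]$, where $\mathcal{T}^t$ is the set of $[t,T]$-valued stopping times. Notation: $X_{(0)}=X-X_0$; $X^\theta$ is $X$ stopped at $\theta$. Data: a cash flow $\mathcal{Q}$ with fair callable value $Q=\widetilde{va}(\mathcal{Q})$; $K$ is the drift of the supermartingale $\mathcal{Q}+Q$, i.e. the unique nondecreasing integrable predictable process with $K_0=0$ such that $\mathcal{Q}+Q+K$ is a martingale on $[0,T]$; a cash flow $\mathcal{P}$ with fair value $P=va(\mathcal{P})$; semimartingales $q,p$ with $q_T=0$; stopping times $\tau_s,\theta$ with values in $[0,T]$; a martingale $h$ with $h=h^\theta$. Set $J^s=\mathbf{1}_{[0,\tau_s)}$,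 $J^e=\mathbf{1}_{[0,\theta)}$ and $$pnl=(\mathcal{Q}+J^sq+(1-J^s)Q)^{\theta}_{(0)}-(\mathcal{P}+J^sp+(1-J^s)P)^{\theta}_{(0)}-h-(1-J^e)\big(J^s_\theta q_\theta+(1-J^s_\theta)Q_\theta\big),$$ and $\mathrm{HVA}=-va(pnl)$. *)

theory Defs
  imports "HOL-Probability.Probability"
begin

text \<open>Time is real, processes are maps \<open>real \<Rightarrow> 'a \<Rightarrow> real\<close>, only the
  values on [0,T] matter. \<open>F t\<close> is the sigma-algebra at time t.\<close>

definition filtration_usual :: "'a measure \<Rightarrow> (real \<Rightarrow> 'a measure) \<Rightarrow> real \<Rightarrow> bool" where
  "filtration_usual M F T \<longleftrightarrow>
     (\<forall>t\<in>{0..T}. subalgebra M (F t)) \<and>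
     (\<forall>s t. 0 \<le> s \<and> s \<le> t \<and> t \<le> T \<longrightarrow> sets (F s) \<subseteq> sets (F t)) \<and>
     \<comment> \<open>usual conditions: completeness\<close>
     (\<forall>N\<in>null_sets M. \<forall>A. A \<subseteq> N \<longrightarrow> A \<in> sets (F 0)) \<and>
     \<comment> \<open>usual conditions: right-continuity\<close>
     (\<forall>t\<in>{0..<T}. sets (F t) = \<Inter>{sets (F s) | s. t < s \<and> s \<le> T})"

definition adapted :: "(real \<Rightarrow> 'a measure) \<Rightarrow> real \<Rightarrow> (real \<Rightarrow> 'a \<Rightarrow> real) \<Rightarrow> bool" where
  "adapted F T X \<longleftrightarrow> (\<forall>t\<in>{0..T}. X t \<in> borel_measurable (F t))"

definition cadlag :: "'a measure \<Rightarrow> real \<Rightarrow> (real \<Rightarrow> 'a \<Rightarrow> real) \<Rightarrow> bool" where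
  "cadlag M T X \<longleftrightarrow> (\<forall>\<omega>\<in>space M.
     (\<forall>t\<in>{0..<T}. continuous (at t within {t..T}) (\<lambda>s. X s \<omega>)) \<and>
     (\<forall>t\<in>{0<..T}. \<exists>l. ((\<lambda>s. X s \<omega>) \<longlongrightarrow> l) (at t within {0..<t})))"

definition integrable_process :: "'a measure \<Rightarrow> real \<Rightarrow> (real \<Rightarrow> 'a \<Rightarrow> real) \<Rightarrow> bool" where
  "integrable_process M T X \<longleftrightarrow> (\<forall>t\<in>{0..T}. integrable M (X t))"

definition stopping_time_on :: "'a measure \<Rightarrow> (real \<Rightarrow> 'a measure) \<Rightarrow> real \<Rightarrow> ('a \<Rightarrow> real) \<Rightarrow> bool" where
  "stopping_time_on M F T \<tau> \<longleftrightarrow>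
     (\<forall>\<omega>\<in>space M. \<tau> \<omega> \<in> {0..T}) \<and>
     (\<forall>t\<in>{0..T}. {\<omega>\<in>space M. \<tau> \<omega> \<le> t} \<in> sets (F t))"

definition stopped :: "('a \<Rightarrow> real) \<Rightarrow> (real \<Rightarrow> 'a \<Rightarrow> real) \<Rightarrow> real \<Rightarrow> 'a \<Rightarrow> real" where
  "stopped \<theta> X = (\<lambda>t \<omega>. X (min t (\<theta> \<omega>)) \<omega>)"

definition from0 :: "(real \<Rightarrow> 'a \<Rightarrow> real) \<Rightarrow> real \<Rightarrow> 'a \<Rightarrow> real" where
  "from0 X = (\<lambda>t \<omega>. X t \<omega> - X 0 \<omega>)"

definition martingale_on :: "'a measure \<Rightarrow> (real \<Rightarrow> 'a measure) \<Rightarrow> real \<Rightarrow> (real \<Rightarrow> 'a \<Rightarrow> real) \<Rightarrow> bool" where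
  "martingale_on M F T X \<longleftrightarrow> adapted F T X \<and> integrable_process M T X \<and>
     (\<forall>s t. 0 \<le> s \<and> s \<le> t \<and> t \<le> T \<longrightarrow>
        (AE \<omega> in M. real_cond_exp M (F s) (X t) \<omega> = X s \<omega>))"

definition local_martingale_on :: "'a measure \<Rightarrow> (real \<Rightarrow> 'a measure) \<Rightarrow> real \<Rightarrow> (real \<Rightarrow> 'a \<Rightarrow> real) \<Rightarrow> bool" where
  "local_martingale_on M F T X \<longleftrightarrow> adapted F T X \<and> cadlag M T X \<and>
     (\<exists>\<sigma> :: nat \<Rightarrow> 'a \<Rightarrow> real. (\<forall>n. stopping_time_on M F T (\<sigma> n)) \<and>
        (\<forall>\<omega>\<in>space M. mono (\<lambda>n. \<sigma> n \<omega>)) \<and>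
        (AE \<omega> in M. \<exists>n. \<sigma> n \<omega> = T) \<and>
        (\<forall>n. martingale_on M F T (stopped (\<sigma> n) X)))"

definition bounded_variation_on :: "(real \<Rightarrow> real) \<Rightarrow> real \<Rightarrow> real \<Rightarrow> bool" where
  "bounded_variation_on f a b \<longleftrightarrow> (\<exists>B. \<forall>(n::nat) (u::nat \<Rightarrow> real).
     a \<le> u 0 \<and> u n \<le> b \<and> (\<forall>i<n. u i \<le> u (Suc i)) \<longrightarrow>
     (\<Sum>i<n. \<bar>f (u (Suc i)) - f (u i)\<bar>) \<le> B)"

definition semimartingale_on :: "'a measure \<Rightarrow> (real \<Rightarrow> 'a measure) \<Rightarrow> real \<Rightarrow> (real \<Rightarrow> 'a \<Rightarrow> real) \<Rightarrow> bool" where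
  "semimartingale_on M F T X \<longleftrightarrow> adapted F T X \<and> cadlag M T X \<and>
     (\<exists>L A. local_martingale_on M F T L \<and> adapted F T A \<and> cadlag M T A \<and>
        (\<forall>\<omega>\<in>space M. bounded_variation_on (\<lambda>t. A t \<omega>) 0 T) \<and>
        (\<forall>t\<in>{0..T}. \<forall>\<omega>\<in>space M. X t \<omega> = X 0 \<omega> + L t \<omega> + A t \<omega>))"

definition predictable_sigma :: "'a measure \<Rightarrow> (real \<Rightarrow> 'a measure) \<Rightarrow> real \<Rightarrow> (real \<times> 'a) measure" where
  "predictable_sigma M F T = sigma ({0..T} \<times> space M)
     ({{0} \<times> A | A. A \<in> sets (F 0)} \<union>
      {{s<..t} \<times> A | s t A. 0 \<le> s \<and> s < t \<and> t \<le> T \<and> A \<in> sets (F s)})"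

definition predictable :: "'a measure \<Rightarrow> (real \<Rightarrow> 'a measure) \<Rightarrow> real \<Rightarrow> (real \<Rightarrow> 'a \<Rightarrow> real) \<Rightarrow> bool" where
  "predictable M F T X \<longleftrightarrow> (\<lambda>p. X (fst p) (snd p)) \<in> borel_measurable (predictable_sigma M F T)"

definition va :: "'a measure \<Rightarrow> (real \<Rightarrow> 'a measure) \<Rightarrow> real \<Rightarrow> (real \<Rightarrow> 'a \<Rightarrow> real) \<Rightarrow> real \<Rightarrow> 'a \<Rightarrow> real" where
  "va M F T X = (\<lambda>t. real_cond_exp M (F t) (\<lambda>\<omega>. X T \<omega> - X t \<omega>))"

definition is_ess_sup :: "'a measure \<Rightarrow> 'a measure \<Rightarrow> ('a \<Rightarrow> real) set \<Rightarrow> ('a \<Rightarrow> real) \<Rightarrow> bool" where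
  "is_ess_sup M G S Y \<longleftrightarrow> Y \<in> borel_measurable G \<and>
     (\<forall>X\<in>S. AE \<omega> in M. X \<omega> \<le> Y \<omega>) \<and>
     (\<forall>Z\<in>borel_measurable G. (\<forall>X\<in>S. AE \<omega> in M. X \<omega> \<le> Z \<omega>) \<longrightarrow> (AE \<omega> in M. Y \<omega> \<le> Z \<omega>))"

definition cash_flow :: "'a measure \<Rightarrow> (real \<Rightarrow> 'a measure) \<Rightarrow> real \<Rightarrow> (real \<Rightarrow> 'a \<Rightarrow> real) \<Rightarrow> bool" where
  "cash_flow M F T Y \<longleftrightarrow> adapted F T Y \<and> cadlag M T Y \<and> integrable_process M T Y \<and>
     (\<forall>\<omega>\<in>space M. Y 0 \<omega> = 0)"

definition is_callable_value :: "'a measure \<Rightarrow> (real \<Rightarrow> 'a measure) \<Rightarrow> real \<Rightarrow> (real \<Rightarrow> 'a \<Rightarrow> real) \<Rightarrow> (real \<Rightarrow> 'a \<Rightarrow> real) \<Rightarrow> bool" where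
  "is_callable_value M F T Y Q \<longleftrightarrow> (\<forall>t\<in>{0..T}. is_ess_sup M (F t)
     {real_cond_exp M (F t) (\<lambda>\<omega>. Y (\<tau> \<omega>) \<omega> - Y t \<omega>) | \<tau>.
        stopping_time_on M F T \<tau> \<and> (\<forall>\<omega>\<in>space M. t \<le> \<tau> \<omega>)} (Q t))"

definition is_fair_value :: "'a measure \<Rightarrow> (real \<Rightarrow> 'a measure) \<Rightarrow> real \<Rightarrow> (real \<Rightarrow> 'a \<Rightarrow> real) \<Rightarrow> (real \<Rightarrow> 'a \<Rightarrow> real) \<Rightarrow> bool" where
  "is_fair_value M F T Y P \<longleftrightarrow> (\<forall>t\<in>{0..T}. AE \<omega> in M. P t \<omega> = va M F T Y t \<omega>)"

definition is_drift :: "'a measure \<Rightarrow> (real \<Rightarrow> 'a measure) \<Rightarrow> real \<Rightarrow> (real \<Rightarrow> 'a \<Rightarrow> real) \<Rightarrow> (real \<Rightarrow> 'a \<Rightarrow> real) \<Rightarrow> bool" where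
  "is_drift M F T X K \<longleftrightarrow> adapted F T K \<and> cadlag M T K \<and> integrable_process M T K \<and>
     predictable M F T K \<and> (\<forall>\<omega>\<in>space M. K 0 \<omega> = 0) \<and>
     (\<forall>\<omega>\<in>space M. mono_on {0..T} (\<lambda>t. K t \<omega>)) \<and>
     martingale_on M F T (\<lambda>t \<omega>. X t \<omega> + K t \<omega>)"

definition ind_before :: "('a \<Rightarrow> real) \<Rightarrow> real \<Rightarrow> 'a \<Rightarrow> real" where
  "ind_before \<tau> = (\<lambda>t \<omega>. if t < \<tau> \<omega> then 1 else 0)"

definition pnl :: "('a \<Rightarrow> real) \<Rightarrow> ('a \<Rightarrow> real) \<Rightarrow> (real \<Rightarrow> 'a \<Rightarrow> real) \<Rightarrow> (real \<Rightarrow> 'a \<Rightarrow> real) \<Rightarrow>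
    (real \<Rightarrow> 'a \<Rightarrow> real) \<Rightarrow> (real \<Rightarrow> 'a \<Rightarrow> real) \<Rightarrow> (real \<Rightarrow> 'a \<Rightarrow> real) \<Rightarrow> (real \<Rightarrow> 'a \<Rightarrow> real) \<Rightarrow>
    (real \<Rightarrow> 'a \<Rightarrow> real) \<Rightarrow> real \<Rightarrow> 'a \<Rightarrow> real" where
  "pnl \<tau>s \<theta> CQ Q CP P q p h = (\<lambda>t \<omega>.
     let Js = ind_before \<tau>s; Je = ind_before \<theta> in
     from0 (stopped \<theta> (\<lambda>t \<omega>. CQ t \<omega> + Js t \<omega> * q t \<omega> + (1 - Js t \<omega>) * Q t \<omega>)) t \<omega>
   - from0 (stopped \<theta> (\<lambda>t \<omega>. CP t \<omega> + Js t \<omega> * p t \<omega> + (1 - Js t \<omega>) * P t \<omega>)) t \<omega>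
   - h t \<omega>
   - (1 - Je t \<omega>) * (Js (\<theta> \<omega>) \<omega> * q (\<theta> \<omega>) \<omega> + (1 - Js (\<theta> \<omega>) \<omega>) * Q (\<theta> \<omega>) \<omega>))"

definition HVA :: "'a measure \<Rightarrow> (real \<Rightarrow> 'a measure) \<Rightarrow> real \<Rightarrow> ('a \<Rightarrow> real) \<Rightarrow> ('a \<Rightarrow> real) \<Rightarrow>
    (real \<Rightarrow> 'a \<Rightarrow> real) \<Rightarrow> (real \<Rightarrow> 'a \<Rightarrow> real) \<Rightarrow> (real \<Rightarrow> 'a \<Rightarrow> real) \<Rightarrow> (real \<Rightarrow> 'a \<Rightarrow> real) \<Rightarrow>
    (real \<Rightarrow> 'a \<Rightarrow> real) \<Rightarrow> (real \<Rightarrow> 'a \<Rightarrow> real) \<Rightarrow> (real \<Rightarrow> 'a \<Rightarrow> real) \<Rightarrow> real \<Rightarrow> 'a \<Rightarrow> real" where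
  "HVA M F T \<tau>s \<theta> CQ Q CP P q p h = (\<lambda>t \<omega>. - va M F T (pnl \<tau>s \<theta> CQ Q CP P q p h) t \<omega>)"

end

(*
  HVA is minus the fair value of pnl, and H + K^theta differs from -pnl only by the stopped
  processes (CQ + Q + K)^theta and (CP + P)^theta and by terms that do not depend on time.
  Both processes are right-continuous martingales: the first because K is the drift of CQ + Q,
  the second because P is the fair value of CP.  By optional sampling their stopped increments
  have zero conditional expectation, so the two valuations agree.

  Optional sampling is obtained by approximating a stopping time from above by stopping times
  with finitely many dyadic values.  For those it is the martingale property on each level set;
  right-continuity gives pointwise convergence, and uniform integrability, which holds because
  the tails of the sampled values are dominated by those of the terminal value, passes it to the
  limit.
*)
theory Submission
  imports Defs
begin

section \<open>Uniform integrability\<close>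

definition tail_integral :: "'a measure \<Rightarrow> real \<Rightarrow> ('a \<Rightarrow> real) \<Rightarrow> real" where
  "tail_integral M r f = (\<integral>\<omega>\<in>{\<omega>\<in>space M. r < \<bar>f \<omega>\<bar>}. \<bar>f \<omega>\<bar> \<partial>M)"

definition uniformly_integrable :: "'a measure \<Rightarrow> (nat \<Rightarrow> 'a \<Rightarrow> real) \<Rightarrow> bool" where
  "uniformly_integrable M Y \<longleftrightarrow> (\<forall>e>0. \<forall>\<^sub>F r in at_top. \<forall>n. tail_integral M r (Y n) \<le> e)"

lemma tail_integral_tendsto_0:
  assumes "integrable M f"
  shows "((\<lambda>r. tail_integral M r f) \<longlongrightarrow> 0) at_top"
proof -
  have [measurable]: "f \<in> borel_measurable M" using assms by auto
  have "((\<lambda>r. \<integral>\<omega>. indicator {\<omega>\<in>space M. r < \<bar>f \<omega>\<bar>} \<omega> * \<bar>f \<omega>\<bar> \<partial>M) \<longlongrightarrow> (\<integral>\<omega>. 0 \<partial>M)) at_top"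
  proof (rule integral_dominated_convergence_at_top[where w = "\<lambda>\<omega>. \<bar>f \<omega>\<bar>"])
    show "AE \<omega> in M. ((\<lambda>r. indicator {\<omega>\<in>space M. r < \<bar>f \<omega>\<bar>} \<omega> * \<bar>f \<omega>\<bar>) \<longlongrightarrow> 0) at_top"
    proof (intro AE_I2 tendsto_eventually)
      show "\<forall>\<^sub>F r in at_top. indicator {\<omega>\<in>space M. r < \<bar>f \<omega>\<bar>} \<omega> * \<bar>f \<omega>\<bar> = 0" for \<omega>
        using eventually_ge_at_top[of "\<bar>f \<omega>\<bar>"] by eventually_elim (auto split: split_indicator)
    qed
  qed (use assms in \<open>auto split: split_indicator\<close>)
  then show ?thesis by (simp add: tail_integral_def set_lebesgue_integral_def)
qed

definition truncate :: "real \<Rightarrow> real \<Rightarrow> real" where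
  "truncate r y = max (- r) (min r y)"

lemma truncate_bounded: "0 \<le> r \<Longrightarrow> \<bar>truncate r y\<bar> \<le> r"
  by (auto simp: truncate_def)

lemma borel_measurable_truncate [measurable]: "truncate r \<in> borel_measurable borel"
  unfolding truncate_def by measurable

lemma integral_truncate_error:
  assumes "finite_measure M" "integrable M f" "0 \<le> r"
  shows "\<bar>(\<integral>\<omega>. f \<omega> \<partial>M) - (\<integral>\<omega>. truncate r (f \<omega>) \<partial>M)\<bar> \<le> tail_integral M r f"
proof -
  interpret finite_measure M by fact
  have [measurable]: "f \<in> borel_measurable M" using assms by auto
  have int_trunc: "integrable M (\<lambda>\<omega>. truncate r (f \<omega>))"
  proof (rule integrable_const_bound[where B = r])
    show "AE \<omega> in M. norm (truncate r (f \<omega>)) \<le> r" using truncate_bounded[OF assms(3)] by simp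
    show "(\<lambda>\<omega>. truncate r (f \<omega>)) \<in> borel_measurable M" by measurable
  qed
  have "\<bar>(\<integral>\<omega>. f \<omega> \<partial>M) - (\<integral>\<omega>. truncate r (f \<omega>) \<partial>M)\<bar> = \<bar>\<integral>\<omega>. f \<omega> - truncate r (f \<omega>) \<partial>M\<bar>"
    using assms(2) int_trunc by simp
  also have "\<dots> \<le> (\<integral>\<omega>. \<bar>f \<omega> - truncate r (f \<omega>)\<bar> \<partial>M)"
    by (rule integral_abs_bound)
  also have "\<dots> \<le> (\<integral>\<omega>. \<bar>f \<omega>\<bar> * indicator {\<omega>\<in>space M. r < \<bar>f \<omega>\<bar>} \<omega> \<partial>M)"
  proof (rule integral_mono)
    show "integrable M (\<lambda>\<omega>. \<bar>f \<omega>\<bar> * indicator {\<omega>\<in>space M. r < \<bar>f \<omega>\<bar>} \<omega>)"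
      by (intro integrable_real_mult_indicator integrable_abs assms(2)) measurable
  qed (use assms int_trunc in \<open>auto simp: truncate_def split: split_indicator\<close>)
  finally show ?thesis by (simp add: tail_integral_def set_lebesgue_integral_def mult.commute)
qed

lemma tendsto_integral_if_uniformly_integrable:
  assumes "finite_measure M" and Y: "\<And>n. integrable M (Y n)" and Z: "integrable M Z"
    and lim: "\<And>\<omega>. \<omega> \<in> space M \<Longrightarrow> (\<lambda>n. Y n \<omega>) \<longlonglongrightarrow> Z \<omega>"
    and ui: "uniformly_integrable M Y"
  shows "(\<lambda>n. \<integral>\<omega>. Y n \<omega> \<partial>M) \<longlonglongrightarrow> (\<integral>\<omega>. Z \<omega> \<partial>M)"
proof (rule tendstoI)
  interpret finite_measure M by fact
  fix e :: real assume "0 < e"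
  have "\<forall>\<^sub>F r in at_top. tail_integral M r Z < e / 3"
    using \<open>0 < e\<close> by (intro order_tendstoD(2)[OF tail_integral_tendsto_0[OF Z]]) simp
  moreover have "\<forall>\<^sub>F r in at_top. \<forall>n. tail_integral M r (Y n) \<le> e / 4"
    using ui \<open>0 < e\<close> unfolding uniformly_integrable_def by (meson divide_pos_pos zero_less_numeral)
  ultimately have "\<forall>\<^sub>F r in at_top.
      0 \<le> r \<and> tail_integral M r Z < e / 3 \<and> (\<forall>n. tail_integral M r (Y n) \<le> e / 4)"
    by (intro eventually_conj eventually_ge_at_top)
  then obtain r where r: "0 \<le> r" "tail_integral M r Z < e / 3" "\<And>n. tail_integral M r (Y n) \<le> e / 4"
    using eventually_happens'[OF trivial_limit_at_top_linorder] by blast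
  have [measurable]: "Y n \<in> borel_measurable M" "Z \<in> borel_measurable M" for n
    using Y Z by auto
  have "(\<lambda>n. \<integral>\<omega>. truncate r (Y n \<omega>) \<partial>M) \<longlonglongrightarrow> (\<integral>\<omega>. truncate r (Z \<omega>) \<partial>M)"
    by (rule integral_dominated_convergence[where w = "\<lambda>_. r"])
      (use truncate_bounded[OF r(1)] in \<open>auto simp: truncate_def intro!: tendsto_intros lim\<close>)
  then have "\<forall>\<^sub>F n in sequentially.
      dist (\<integral>\<omega>. truncate r (Y n \<omega>) \<partial>M) (\<integral>\<omega>. truncate r (Z \<omega>) \<partial>M) < e / 3"
    using \<open>0 < e\<close> by (intro tendstoD) simp_all
  then show "\<forall>\<^sub>F n in sequentially. dist (\<integral>\<omega>. Y n \<omega> \<partial>M) (\<integral>\<omega>. Z \<omega> \<partial>M) < e"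
  proof eventually_elim
    case (elim n)
    show ?case
      using elim integral_truncate_error[OF assms(1) Y[of n] r(1)] r(2) r(3)[of n]
        integral_truncate_error[OF assms(1) Z r(1)]
      unfolding dist_real_def abs_le_iff abs_less_iff by linarith
  qed
qed

lemma measure_mult_le_tail_integral:
  assumes "finite_measure M" "integrable M f"
  shows "r * measure M {\<omega>\<in>space M. r < \<bar>f \<omega>\<bar>} \<le> tail_integral M r f"
proof -
  interpret finite_measure M by fact
  have [measurable]: "f \<in> borel_measurable M" using assms(2) by auto
  let ?B = "{\<omega>\<in>space M. r < \<bar>f \<omega>\<bar>}"
  have B [measurable]: "?B \<in> sets M" by measurable
  have "r * measure M ?B = (\<integral>\<omega>\<in>?B. r \<partial>M)"
    using B by (simp add: set_integral_const)
  also have "\<dots> \<le> tail_integral M r f"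
    unfolding tail_integral_def
  proof (rule set_integral_mono)
    show "set_integrable M ?B (\<lambda>_. r)"
      using B by (simp add: set_integrable_def integrable_real_indicator less_top[symmetric])
    show "set_integrable M ?B (\<lambda>\<omega>. \<bar>f \<omega>\<bar>)"
      using integrable_mult_indicator[OF B integrable_abs[OF assms(2)]] by (simp add: set_integrable_def)
  qed simp
  finally show ?thesis .
qed

lemma set_integral_abs_le_tail_integral:
  assumes "finite_measure M" "integrable M f" "B \<in> sets M" "0 \<le> L"
  shows "(\<integral>\<omega>\<in>B. \<bar>f \<omega>\<bar> \<partial>M) \<le> tail_integral M L f + L * measure M B"
proof -
  interpret finite_measure M by fact
  have [measurable]: "f \<in> borel_measurable M" using assms(2) by auto
  have int: "set_integrable M A (\<lambda>\<omega>. \<bar>f \<omega>\<bar>)" if "A \<in> sets M" for A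
    using integrable_mult_indicator[OF that integrable_abs[OF assms(2)]] by (simp add: set_integrable_def)
  have "(\<integral>\<omega>\<in>B. \<bar>f \<omega>\<bar> \<partial>M) \<le> (\<integral>\<omega>. indicator {\<omega>\<in>space M. L < \<bar>f \<omega>\<bar>} \<omega> * \<bar>f \<omega>\<bar> + L * indicator B \<omega> \<partial>M)"
    unfolding set_lebesgue_integral_def
  proof (rule integral_mono)
    show "integrable M (\<lambda>\<omega>. indicator {\<omega>\<in>space M. L < \<bar>f \<omega>\<bar>} \<omega> * \<bar>f \<omega>\<bar> + L * indicator B \<omega>)"
      using int[of "{\<omega>\<in>space M. L < \<bar>f \<omega>\<bar>}"] assms(3)
      by (intro Bochner_Integration.integrable_add integrable_mult_right integrable_real_indicator)
        (auto simp: set_integrable_def less_top[symmetric])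
  qed (use int[OF assms(3)] assms(4) in \<open>auto simp: set_integrable_def split: split_indicator\<close>)
  also have "\<dots> = tail_integral M L f + L * measure M B"
    using int[of "{\<omega>\<in>space M. L < \<bar>f \<omega>\<bar>}"] assms(3)
    by (subst Bochner_Integration.integral_add)
      (auto simp: tail_integral_def set_integrable_def set_lebesgue_integral_def less_top[symmetric])
  finally show ?thesis .
qed

lemma uniformly_integrable_if_tail_dominated:
  assumes "finite_measure M" and Y: "\<And>n. integrable M (Y n)" and W: "integrable M W"
    and dom: "\<And>n r. tail_integral M r (Y n) \<le> (\<integral>\<omega>\<in>{\<omega>\<in>space M. r < \<bar>Y n \<omega>\<bar>}. \<bar>W \<omega>\<bar> \<partial>M)"
  shows "uniformly_integrable M Y"
  unfolding uniformly_integrable_def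
proof (intro allI impI)
  interpret finite_measure M by fact
  have [measurable]: "Y n \<in> borel_measurable M" "W \<in> borel_measurable M" for n
    using Y W by auto
  fix e :: real assume "0 < e"
  have "\<forall>\<^sub>F L in at_top. 0 \<le> L \<and> tail_integral M L W < e / 2"
    using \<open>0 < e\<close>
    by (intro eventually_conj eventually_ge_at_top order_tendstoD(2)[OF tail_integral_tendsto_0[OF W]])
      simp
  then obtain L where L: "0 \<le> L" "tail_integral M L W < e / 2"
    using eventually_happens'[OF trivial_limit_at_top_linorder] by blast
  define IW where "IW = (\<integral>\<omega>. \<bar>W \<omega>\<bar> \<partial>M)"
  txt \<open>By Markov's inequality \<open>{r < \<bar>Y n\<bar>}\<close> has measure at most \<open>IW / r\<close>.\<close>
  show "\<forall>\<^sub>F r in at_top. \<forall>n. tail_integral M r (Y n) \<le> e"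
    using eventually_gt_at_top[of 0] eventually_ge_at_top[of "2 * L * IW / e"]
  proof eventually_elim
    case (elim r)
    show ?case
    proof
      fix n
      define B where "B = {\<omega>\<in>space M. r < \<bar>Y n \<omega>\<bar>}"
      have B [measurable]: "B \<in> sets M" unfolding B_def by measurable
      have "(\<integral>\<omega>\<in>B. \<bar>W \<omega>\<bar> \<partial>M) \<le> IW"
        unfolding IW_def set_lebesgue_integral_def using W
        by (intro integral_mono integrable_mult_indicator[OF B]) (auto split: split_indicator)
      then have "r * measure M B \<le> IW"
        using measure_mult_le_tail_integral[OF assms(1) Y, of r n] dom[of r n] by (simp add: B_def)
      then have "2 * L * (r * measure M B) \<le> 2 * L * IW"
        using L(1) by (intro mult_left_mono) auto
      also have "\<dots> \<le> r * e"
        using elim \<open>0 < e\<close> by (simp add: field_simps)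
      finally have "L * measure M B \<le> e / 2"
        using elim(1) by (simp add: field_simps)
      then show "tail_integral M r (Y n) \<le> e"
        using dom[of r n] set_integral_abs_le_tail_integral[OF assms(1) W B L(1)] L(2)
        by (simp add: B_def)
    qed
  qed
qed

section \<open>Sampling at finitely many times and dyadic approximation\<close>

lemma integrable_bounded_mult:
  fixes f g :: "'a \<Rightarrow> real"
  assumes "integrable M f" "g \<in> borel_measurable M" "\<And>\<omega>. \<omega> \<in> space M \<Longrightarrow> \<bar>g \<omega>\<bar> \<le> 1"
  shows "integrable M (\<lambda>\<omega>. g \<omega> * f \<omega>)"
proof (rule Bochner_Integration.integrable_bound[OF assms(1)])
  show "(\<lambda>\<omega>. g \<omega> * f \<omega>) \<in> borel_measurable M"
    using assms(1,2) by measurable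
  show "AE \<omega> in M. norm (g \<omega> * f \<omega>) \<le> norm (f \<omega>)"
    using assms(3) by (intro AE_I2) (simp add: abs_mult mult_left_le_one_le)
qed

definition right_continuous_paths :: "'a measure \<Rightarrow> real \<Rightarrow> (real \<Rightarrow> 'a \<Rightarrow> real) \<Rightarrow> bool" where
  "right_continuous_paths M T X \<longleftrightarrow>
     (\<forall>\<omega>\<in>space M. \<forall>t\<in>{0..<T}. continuous (at t within {t..T}) (\<lambda>s. X s \<omega>))"

lemma right_continuous_paths_if_cadlag: "cadlag M T X \<Longrightarrow> right_continuous_paths M T X"
  by (simp add: cadlag_def right_continuous_paths_def)

lemma right_continuous_paths_add:
  "right_continuous_paths M T X \<Longrightarrow> right_continuous_paths M T Y \<Longrightarrow>
    right_continuous_paths M T (\<lambda>t \<omega>. X t \<omega> + Y t \<omega>)"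
  by (simp add: right_continuous_paths_def continuous_add)

lemma indicator_mult_finite_sampling:
  fixes g :: "real \<Rightarrow> real"
  assumes "finite S" "\<sigma> \<omega> \<in> S"
  shows "indicator B \<omega> * g (\<sigma> \<omega>) = (\<Sum>s\<in>S. indicator {\<omega>\<in>B. \<sigma> \<omega> = s} \<omega> * g s)"
proof -
  have "(\<Sum>s\<in>S. indicator {\<omega>\<in>B. \<sigma> \<omega> = s} \<omega> * g s) = (\<Sum>s\<in>S. if s = \<sigma> \<omega> then indicator B \<omega> * g s else 0)"
    by (intro sum.cong) (auto split: split_indicator)
  then show ?thesis using assms by simp
qed

lemma integrable_finite_sampling:
  fixes U :: "real \<Rightarrow> 'a \<Rightarrow> real"
  assumes "finite S" "\<And>\<omega>. \<omega> \<in> space M \<Longrightarrow> \<sigma> \<omega> \<in> S"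
    and "\<And>s. s \<in> S \<Longrightarrow> {\<omega>\<in>space M. \<sigma> \<omega> = s} \<in> sets M" "\<And>s. s \<in> S \<Longrightarrow> integrable M (U s)"
  shows "integrable M (\<lambda>\<omega>. U (\<sigma> \<omega>) \<omega>)"
proof -
  have int_sum: "integrable M (\<lambda>\<omega>. \<Sum>s\<in>S. indicator {\<omega>\<in>space M. \<sigma> \<omega> = s} \<omega> * U s \<omega>)"
  proof (intro Bochner_Integration.integrable_sum)
    fix s assume "s \<in> S"
    then show "integrable M (\<lambda>\<omega>. indicator {\<omega>\<in>space M. \<sigma> \<omega> = s} \<omega> * U s \<omega>)"
      using integrable_mult_indicator[OF assms(3,4)] by simp
  qed
  have eq: "(\<Sum>s\<in>S. indicator {\<omega>\<in>space M. \<sigma> \<omega> = s} \<omega> * U s \<omega>) = U (\<sigma> \<omega>) \<omega>"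
    if "\<omega> \<in> space M" for \<omega>
    using indicator_mult_finite_sampling[where \<sigma> = \<sigma> and B = "space M" and g = "\<lambda>s. U s \<omega>",
        OF assms(1) assms(2)[OF that]] that
    by simp
  have "integrable M (\<lambda>\<omega>. \<Sum>s\<in>S. indicator {\<omega>\<in>space M. \<sigma> \<omega> = s} \<omega> * U s \<omega>) \<longleftrightarrow>
      integrable M (\<lambda>\<omega>. U (\<sigma> \<omega>) \<omega>)"
    using eq by (intro Bochner_Integration.integrable_cong) auto
  with int_sum show ?thesis by blast
qed

definition dyadic_ceiling :: "real \<Rightarrow> nat \<Rightarrow> real \<Rightarrow> real" where
  "dyadic_ceiling T n s = T * of_int \<lceil>s * 2^n / T\<rceil> / 2^n"

definition dyadic_grid :: "real \<Rightarrow> nat \<Rightarrow> real set" where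
  "dyadic_grid T n = (\<lambda>k. T * of_int k / 2^n) ` {0..2^n}"

lemma finite_dyadic_grid: "finite (dyadic_grid T n)"
  by (simp add: dyadic_grid_def)

lemma dyadic_grid_subset:
  assumes "0 \<le> T"
  shows "dyadic_grid T n \<subseteq> {0..T}"
proof
  fix g assume "g \<in> dyadic_grid T n"
  then obtain k where g: "g = T * of_int k / 2^n" and "k \<in> {0..2^n}"
    unfolding dyadic_grid_def by blast
  then have k: "0 \<le> k" "k \<le> 2^n" by simp_all
  then have "T * of_int k \<le> T * 2^n"
    using assms by (intro mult_left_mono) simp_all
  then show "g \<in> {0..T}"
    using assms k by (simp add: g divide_le_eq)
qed

lemma dyadic_ceiling_bounds:
  assumes "0 < T" "s \<in> {0..T}"
  shows "s \<le> dyadic_ceiling T n s" "dyadic_ceiling T n s < s + T / 2^n"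
    and "dyadic_ceiling T n s \<in> dyadic_grid T n"
proof -
  define k where "k = \<lceil>s * 2^n / T\<rceil>"
  have "s * 2^n / T \<le> of_int k" "of_int k < s * 2^n / T + 1"
    unfolding k_def by linarith+
  then show "s \<le> dyadic_ceiling T n s" "dyadic_ceiling T n s < s + T / 2^n"
    using assms(1) by (simp_all add: dyadic_ceiling_def k_def[symmetric] field_simps)
  have "0 \<le> s * 2^n / T" "s * 2^n / T \<le> 2^n"
    using assms by (simp_all add: field_simps)
  then have "0 \<le> k" "k \<le> 2^n"
    unfolding k_def by (simp_all add: ceiling_le_iff)
  then show "dyadic_ceiling T n s \<in> dyadic_grid T n"
    unfolding dyadic_ceiling_def dyadic_grid_def k_def[symmetric] by (intro imageI) simp
qed

lemma dyadic_ceiling_eq_iff: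
  assumes "0 < T" "g \<in> dyadic_grid T n"
  shows "dyadic_ceiling T n s = g \<longleftrightarrow> g - T / 2^n < s \<and> s \<le> g"
proof -
  obtain k where g: "g = T * of_int k / 2^n"
    using assms(2) unfolding dyadic_grid_def by blast
  have "dyadic_ceiling T n s = g \<longleftrightarrow> \<lceil>s * 2^n / T\<rceil> = k"
    using assms(1) by (simp add: dyadic_ceiling_def g)
  also have "\<dots> \<longleftrightarrow> of_int k - 1 < s * 2^n / T \<and> s * 2^n / T \<le> of_int k"
    by (rule ceiling_eq_iff)
  also have "\<dots> \<longleftrightarrow> g - T / 2^n < s \<and> s \<le> g"
    using assms(1) by (simp add: g field_simps)
  finally show ?thesis .
qed

lemma dyadic_ceiling_tendsto:
  assumes "0 < T" "s \<in> {0..T}"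
  shows "(\<lambda>n. dyadic_ceiling T n s) \<longlonglongrightarrow> s"
proof (rule tendsto_sandwich[where f = "\<lambda>_. s" and h = "\<lambda>n. s + T / 2^n"])
  show "(\<lambda>n. s + T / 2^n) \<longlonglongrightarrow> s"
    using tendsto_add[OF tendsto_const LIMSEQ_divide_realpow_zero[of 2 T]] by simp
qed (use dyadic_ceiling_bounds[OF assms] in \<open>auto intro: always_eventually less_imp_le\<close>)

lemma dyadic_ceiling_in_interval:
  assumes "0 < T" "s \<in> {0..T}"
  shows "dyadic_ceiling T n s \<in> {s..T}"
  using dyadic_ceiling_bounds[OF assms, of n] dyadic_grid_subset[OF less_imp_le[OF assms(1)], of n]
  by auto

lemma dyadic_sampling_tendsto:
  assumes "right_continuous_paths M T X" "\<omega> \<in> space M" "0 < T" "s \<in> {0..T}"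
  shows "(\<lambda>n. X (dyadic_ceiling T n s) \<omega>) \<longlonglongrightarrow> X s \<omega>"
proof (cases "s = T")
  case True
  then have "dyadic_ceiling T n s = T" for n
    using dyadic_ceiling_in_interval[OF assms(3,4), of n] by simp
  then show ?thesis using True by simp
next
  case False
  then have "continuous (at s within {s..T}) (\<lambda>t. X t \<omega>)"
    using assms by (simp add: right_continuous_paths_def)
  then show ?thesis
    using dyadic_ceiling_in_interval[OF assms(3,4)] dyadic_ceiling_tendsto[OF assms(3,4)]
    by (rule continuous_within_tendsto_compose')
qed

section \<open>Optional sampling for right-continuous martingales\<close>

locale filtered_prob_space = prob_space M for M :: "'a measure" +
  fixes F :: "real \<Rightarrow> 'a measure" and T :: real
  assumes horizon_nonneg: "0 \<le> T"
    and subalgebra_F: "t \<in> {0..T} \<Longrightarrow> subalgebra M (F t)"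
    and sets_F_mono: "0 \<le> s \<Longrightarrow> s \<le> t \<Longrightarrow> t \<le> T \<Longrightarrow> sets (F s) \<subseteq> sets (F t)"

lemma filtered_prob_space_if_filtration_usual:
  "prob_space M \<Longrightarrow> 0 \<le> T \<Longrightarrow> filtration_usual M F T \<Longrightarrow> filtered_prob_space M F T"
  by (simp add: filtered_prob_space_def filtered_prob_space_axioms_def filtration_usual_def)

context filtered_prob_space
begin

lemma sets_F_subset: "t \<in> {0..T} \<Longrightarrow> sets (F t) \<subseteq> sets M"
  using subalgebra_F by (simp add: subalgebra_def)

lemma space_F: "t \<in> {0..T} \<Longrightarrow> space (F t) = space M"
  using subalgebra_F by (simp add: subalgebra_def)

lemma sigma_finite_subalgebra_F: "t \<in> {0..T} \<Longrightarrow> sigma_finite_subalgebra M (F t)"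
  by (intro finite_measure_subalgebra_is_sigma_finite)
    (simp add: finite_measure_subalgebra_def finite_measure_subalgebra_axioms_def subalgebra_F
      finite_measure_axioms)

lemma borel_measurable_if_F: "t \<in> {0..T} \<Longrightarrow> X \<in> borel_measurable (F t) \<Longrightarrow> X \<in> borel_measurable M"
  using measurable_from_subalg subalgebra_F by blast

lemma stopping_time_range:
  "stopping_time_on M F T \<sigma> \<Longrightarrow> \<omega> \<in> space M \<Longrightarrow> 0 \<le> \<sigma> \<omega> \<and> \<sigma> \<omega> \<le> T"
  by (simp add: stopping_time_on_def)

lemma stopping_time_interval_sets:
  assumes "stopping_time_on M F T \<sigma>" "b \<in> {0..T}" "a \<le> b"
  shows "{\<omega>\<in>space M. a < \<sigma> \<omega> \<and> \<sigma> \<omega> \<le> b} \<in> sets (F b)"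
proof -
  have le_b: "{\<omega>\<in>space M. \<sigma> \<omega> \<le> b} \<in> sets (F b)"
    using assms(1,2) by (simp add: stopping_time_on_def)
  have "{\<omega>\<in>space M. \<sigma> \<omega> \<le> a} \<in> sets (F b)"
  proof (cases "a < 0")
    case True
    then have "{\<omega>\<in>space M. \<sigma> \<omega> \<le> a} = {}"
      using assms(1) stopping_time_range by fastforce
    then show ?thesis by (metis sets.empty_sets)
  next
    case False
    then have "{\<omega>\<in>space M. \<sigma> \<omega> \<le> a} \<in> sets (F a)"
      using assms by (simp add: stopping_time_on_def)
    then show ?thesis using sets_F_mono[of a b] False assms(2,3) by auto
  qed
  moreover have "{\<omega>\<in>space M. a < \<sigma> \<omega> \<and> \<sigma> \<omega> \<le> b} = {\<omega>\<in>space M. \<sigma> \<omega> \<le> b} - {\<omega>\<in>space M. \<sigma> \<omega> \<le> a}"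
    by auto
  ultimately show ?thesis using le_b by auto
qed

lemma stopping_time_measurable:
  assumes "stopping_time_on M F T \<sigma>"
  shows "\<sigma> \<in> borel_measurable M"
proof (rule borel_measurableI_le)
  fix y
  show "{\<omega>\<in>space M. \<sigma> \<omega> \<le> y} \<in> sets M"
  proof (cases "y < 0")
    case True
    then have "{\<omega>\<in>space M. \<sigma> \<omega> \<le> y} = {}"
      using assms stopping_time_range by fastforce
    then show ?thesis by (metis sets.empty_sets)
  next
    case False
    then have yT: "min y T \<in> {0..T}"
      using horizon_nonneg by simp
    have "{\<omega>\<in>space M. \<sigma> \<omega> \<le> y} = {\<omega>\<in>space M. \<sigma> \<omega> \<le> min y T}"
      using assms stopping_time_range by fastforce
    also have "\<dots> \<in> sets (F (min y T))"
      using assms yT unfolding stopping_time_on_def by blast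
    finally show ?thesis using sets_F_subset yT by blast
  qed
qed

lemma martingale_set_integral_eq:
  assumes "martingale_on M F T X" "s \<in> {0..T}" "C \<in> sets (F s)"
  shows "(\<integral>\<omega>\<in>C. X s \<omega> \<partial>M) = (\<integral>\<omega>\<in>C. X T \<omega> \<partial>M)"
proof -
  interpret sigma_finite_subalgebra M "F s" using sigma_finite_subalgebra_F assms(2) .
  have T: "T \<in> {0..T}" using assms(2) by auto
  have [measurable]: "X s \<in> borel_measurable M" "integrable M (X T)" "C \<in> sets M"
    using assms borel_measurable_if_F sets_F_subset T
    unfolding martingale_on_def adapted_def integrable_process_def by auto
  have "AE \<omega> in M. real_cond_exp M (F s) (X T) \<omega> = X s \<omega>"
    using assms(1,2) by (simp add: martingale_on_def)
  then have "(\<integral>\<omega>\<in>C. real_cond_exp M (F s) (X T) \<omega> \<partial>M) = (\<integral>\<omega>\<in>C. X s \<omega> \<partial>M)"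
    by (intro set_lebesgue_integral_cong_AE) (auto intro: borel_measurable_cond_exp2)
  moreover have "(\<integral>\<omega>\<in>C. X T \<omega> \<partial>M) = (\<integral>\<omega>\<in>C. real_cond_exp M (F s) (X T) \<omega> \<partial>M)"
    using \<open>integrable M (X T)\<close> assms(3) by (rule real_cond_exp_intA)
  ultimately show ?thesis by simp
qed

lemma martingale_onI_set_integral:
  assumes "adapted F T X" "integrable_process M T X"
    and eq: "\<And>s C. s \<in> {0..T} \<Longrightarrow> C \<in> sets (F s) \<Longrightarrow> (\<integral>\<omega>\<in>C. X s \<omega> \<partial>M) = (\<integral>\<omega>\<in>C. X T \<omega> \<partial>M)"
  shows "martingale_on M F T X"
  unfolding martingale_on_def
proof (intro conjI allI impI assms(1,2))
  fix s t assume st: "0 \<le> s \<and> s \<le> t \<and> t \<le> T"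
  then have s: "s \<in> {0..T}" and t: "t \<in> {0..T}" by auto
  interpret sigma_finite_subalgebra M "F s" using sigma_finite_subalgebra_F s .
  show "AE \<omega> in M. real_cond_exp M (F s) (X t) \<omega> = X s \<omega>"
  proof (rule real_cond_exp_charact)
    fix A assume A: "A \<in> sets (F s)"
    then have "A \<in> sets (F t)" using sets_F_mono st by auto
    then show "(\<integral>\<omega>\<in>A. X t \<omega> \<partial>M) = (\<integral>\<omega>\<in>A. X s \<omega> \<partial>M)"
      using eq[OF t] eq[OF s A] by simp
  qed (use assms(1,2) s t in \<open>auto simp: adapted_def integrable_process_def\<close>)
qed

lemma martingale_set_integral_abs_le:
  assumes X: "martingale_on M F T X" and s: "s \<in> {0..T}" and C: "C \<in> sets (F s)"
  shows "(\<integral>\<omega>\<in>C. \<bar>X s \<omega>\<bar> \<partial>M) \<le> (\<integral>\<omega>\<in>C. \<bar>X T \<omega>\<bar> \<partial>M)"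
proof -
  have T: "T \<in> {0..T}" using s by auto
  have [measurable]: "X s \<in> borel_measurable (F s)"
    using X s by (simp add: martingale_on_def adapted_def)
  define Cp where "Cp = C \<inter> {\<omega>\<in>space (F s). 0 \<le> X s \<omega>}"
  define Cm where "Cm = C \<inter> {\<omega>\<in>space (F s). X s \<omega> < 0}"
  have CF: "Cp \<in> sets (F s)" "Cm \<in> sets (F s)"
    unfolding Cp_def Cm_def using C by measurable
  then have CM [measurable]: "C \<in> sets M" "Cp \<in> sets M" "Cm \<in> sets M"
    using C sets_F_subset s by auto
  have int: "integrable M (\<lambda>\<omega>. indicator A \<omega> * X u \<omega>)" if "A \<in> sets M" "u \<in> {0..T}" for A u
    using integrable_mult_indicator[OF that(1), of "X u"] X that(2)
    by (simp add: martingale_on_def integrable_process_def)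
  have "(\<integral>\<omega>\<in>C. \<bar>X s \<omega>\<bar> \<partial>M) = (\<integral>\<omega>. indicator Cp \<omega> * X s \<omega> - indicator Cm \<omega> * X s \<omega> \<partial>M)"
    unfolding set_lebesgue_integral_def using space_F[OF s]
    by (intro Bochner_Integration.integral_cong) (auto simp: Cp_def Cm_def split: split_indicator)
  also have "\<dots> = (\<integral>\<omega>\<in>Cp. X s \<omega> \<partial>M) - (\<integral>\<omega>\<in>Cm. X s \<omega> \<partial>M)"
    unfolding set_lebesgue_integral_def using int[OF CM(2) s] int[OF CM(3) s] by simp
  also have "\<dots> = (\<integral>\<omega>\<in>Cp. X T \<omega> \<partial>M) - (\<integral>\<omega>\<in>Cm. X T \<omega> \<partial>M)"
    using martingale_set_integral_eq[OF X s] CF by simp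
  also have "\<dots> = (\<integral>\<omega>. indicator Cp \<omega> * X T \<omega> - indicator Cm \<omega> * X T \<omega> \<partial>M)"
    unfolding set_lebesgue_integral_def using int[OF CM(2) T] int[OF CM(3) T] by simp
  also have "\<dots> \<le> (\<integral>\<omega>\<in>C. \<bar>X T \<omega>\<bar> \<partial>M)"
    unfolding set_lebesgue_integral_def
  proof (rule integral_mono)
    show "integrable M (\<lambda>\<omega>. indicator C \<omega> *\<^sub>R \<bar>X T \<omega>\<bar>)"
      using integrable_abs[OF int[OF CM(1) T]] by (simp add: abs_mult)
  qed (use int[OF CM(2) T] int[OF CM(3) T] in \<open>auto simp: Cp_def Cm_def split: split_indicator\<close>)
  finally show ?thesis .
qed

lemma set_integral_finite_sampling_le:
  fixes U :: "real \<Rightarrow> 'a \<Rightarrow> real"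
  assumes S: "finite S" "S \<subseteq> {0..T}" and \<sigma>: "\<And>\<omega>. \<omega> \<in> space M \<Longrightarrow> \<sigma> \<omega> \<in> S"
    and B: "\<And>s. s \<in> S \<Longrightarrow> {\<omega>\<in>B. \<sigma> \<omega> = s} \<in> sets (F s)"
    and U: "\<And>s. s \<in> S \<Longrightarrow> integrable M (U s)" and V: "integrable M V"
    and le: "\<And>s C. s \<in> S \<Longrightarrow> C \<in> sets (F s) \<Longrightarrow> (\<integral>\<omega>\<in>C. U s \<omega> \<partial>M) \<le> (\<integral>\<omega>\<in>C. V \<omega> \<partial>M)"
  shows "(\<integral>\<omega>\<in>B. U (\<sigma> \<omega>) \<omega> \<partial>M) \<le> (\<integral>\<omega>\<in>B. V \<omega> \<partial>M)"
proof -
  define Bs where "Bs s = {\<omega>\<in>B. \<sigma> \<omega> = s}" for s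
  have Bs_sets: "Bs s \<in> sets M" if "s \<in> S" for s
    using B[OF that] sets_F_subset S(2) that unfolding Bs_def by blast
  have split: "(\<integral>\<omega>\<in>B. W (\<sigma> \<omega>) \<omega> \<partial>M) = (\<Sum>s\<in>S. \<integral>\<omega>\<in>Bs s. W s \<omega> \<partial>M)"
    if W: "\<And>s. s \<in> S \<Longrightarrow> integrable M (W s)" for W :: "real \<Rightarrow> 'a \<Rightarrow> real"
  proof -
    have "indicator B \<omega> * W (\<sigma> \<omega>) \<omega> = (\<Sum>s\<in>S. indicator (Bs s) \<omega> * W s \<omega>)"
      if "\<omega> \<in> space M" for \<omega>
      unfolding Bs_def
      by (rule indicator_mult_finite_sampling[where \<sigma> = \<sigma> and g = "\<lambda>s. W s \<omega>", OF S(1) \<sigma>[OF that]])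
    then have "(\<integral>\<omega>\<in>B. W (\<sigma> \<omega>) \<omega> \<partial>M) = (\<integral>\<omega>. (\<Sum>s\<in>S. indicator (Bs s) \<omega> * W s \<omega>) \<partial>M)"
      unfolding set_lebesgue_integral_def by (intro Bochner_Integration.integral_cong) simp_all
    also have "\<dots> = (\<Sum>s\<in>S. \<integral>\<omega>. indicator (Bs s) \<omega> * W s \<omega> \<partial>M)"
      using integrable_mult_indicator[OF Bs_sets W] by (intro Bochner_Integration.integral_sum) simp
    finally show ?thesis by (simp add: set_lebesgue_integral_def)
  qed
  have "(\<integral>\<omega>\<in>B. U (\<sigma> \<omega>) \<omega> \<partial>M) = (\<Sum>s\<in>S. \<integral>\<omega>\<in>Bs s. U s \<omega> \<partial>M)"
    using U by (rule split)
  also have "\<dots> \<le> (\<Sum>s\<in>S. \<integral>\<omega>\<in>Bs s. V \<omega> \<partial>M)"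
    by (intro sum_mono le) (simp_all add: Bs_def B)
  also have "\<dots> = (\<integral>\<omega>\<in>B. V \<omega> \<partial>M)"
    by (rule split[of "\<lambda>_. V", OF V, symmetric])
  finally show ?thesis .
qed

lemma dyadic_sampling_level_set:
  assumes "stopping_time_on M F T \<sigma>" "0 < T" "g \<in> dyadic_grid T n"
  shows "{\<omega>\<in>space M. dyadic_ceiling T n (\<sigma> \<omega>) = g} \<in> sets (F g)"
proof -
  have "{\<omega>\<in>space M. dyadic_ceiling T n (\<sigma> \<omega>) = g} = {\<omega>\<in>space M. g - T / 2^n < \<sigma> \<omega> \<and> \<sigma> \<omega> \<le> g}"
    using dyadic_ceiling_eq_iff[OF assms(2,3)] by auto
  also have "\<dots> \<in> sets (F g)"
    using assms dyadic_grid_subset[of T n] by (intro stopping_time_interval_sets) auto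
  finally show ?thesis .
qed

lemma dyadic_sampling_in_grid:
  assumes "stopping_time_on M F T \<sigma>" "0 < T" "\<omega> \<in> space M"
  shows "dyadic_ceiling T n (\<sigma> \<omega>) \<in> dyadic_grid T n"
  using dyadic_ceiling_bounds(3)[OF assms(2)] stopping_time_range[OF assms(1,3)] by simp

lemma integrable_dyadic_sampling:
  fixes X :: "real \<Rightarrow> 'a \<Rightarrow> real"
  assumes \<sigma>: "stopping_time_on M F T \<sigma>" and T: "0 < T"
    and X: "\<And>s. s \<in> {0..T} \<Longrightarrow> integrable M (X s)"
  shows "integrable M (\<lambda>\<omega>. X (dyadic_ceiling T n (\<sigma> \<omega>)) \<omega>)"
proof (rule integrable_finite_sampling[where S = "dyadic_grid T n"
      and \<sigma> = "\<lambda>\<omega>. dyadic_ceiling T n (\<sigma> \<omega>)"])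
  show "dyadic_ceiling T n (\<sigma> \<omega>) \<in> dyadic_grid T n" if "\<omega> \<in> space M" for \<omega>
    using dyadic_sampling_in_grid[OF \<sigma> T that] .
  fix g assume g: "g \<in> dyadic_grid T n"
  then have "g \<in> {0..T}"
    using dyadic_grid_subset[OF less_imp_le[OF T]] by blast
  then show "{\<omega>\<in>space M. dyadic_ceiling T n (\<sigma> \<omega>) = g} \<in> sets M" "integrable M (X g)"
    using dyadic_sampling_level_set[OF \<sigma> T g] sets_F_subset X by auto
qed (rule finite_dyadic_grid)

lemma set_integral_dyadic_sampling_le:
  fixes U :: "real \<Rightarrow> 'a \<Rightarrow> real"
  assumes \<sigma>: "stopping_time_on M F T \<sigma>" and T: "0 < T"
    and B: "\<And>g. g \<in> dyadic_grid T n \<Longrightarrow> {\<omega>\<in>B. dyadic_ceiling T n (\<sigma> \<omega>) = g} \<in> sets (F g)"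
    and U: "\<And>s. s \<in> {0..T} \<Longrightarrow> integrable M (U s)" and V: "integrable M V"
    and le: "\<And>s C. s \<in> {0..T} \<Longrightarrow> C \<in> sets (F s) \<Longrightarrow> (\<integral>\<omega>\<in>C. U s \<omega> \<partial>M) \<le> (\<integral>\<omega>\<in>C. V \<omega> \<partial>M)"
  shows "(\<integral>\<omega>\<in>B. U (dyadic_ceiling T n (\<sigma> \<omega>)) \<omega> \<partial>M) \<le> (\<integral>\<omega>\<in>B. V \<omega> \<partial>M)"
proof (rule set_integral_finite_sampling_le
    [OF finite_dyadic_grid _ dyadic_sampling_in_grid[OF \<sigma> T] B _ V])
  show grid: "dyadic_grid T n \<subseteq> {0..T}"
    using dyadic_grid_subset T by simp
  show "integrable M (U s)" if "s \<in> dyadic_grid T n" for s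
    using U that grid by blast
  show "(\<integral>\<omega>\<in>C. U s \<omega> \<partial>M) \<le> (\<integral>\<omega>\<in>C. V \<omega> \<partial>M)" if "s \<in> dyadic_grid T n" "C \<in> sets (F s)" for s C
    using le that grid by blast
qed

lemma integral_dyadic_sampling_martingale:
  assumes X: "martingale_on M F T X" and \<sigma>: "stopping_time_on M F T \<sigma>" and T: "0 < T"
  shows "(\<integral>\<omega>. X (dyadic_ceiling T n (\<sigma> \<omega>)) \<omega> \<partial>M) = (\<integral>\<omega>. X T \<omega> \<partial>M)"
proof -
  have int_X: "integrable M (X s)" if "s \<in> {0..T}" for s
    using X that by (simp add: martingale_on_def integrable_process_def)
  have T_in: "T \<in> {0..T}" using T by simp
  have int_sampled: "integrable M (\<lambda>\<omega>. X (dyadic_ceiling T n (\<sigma> \<omega>)) \<omega>)"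
    using int_X by (rule integrable_dyadic_sampling[OF \<sigma> T])
  note level = dyadic_sampling_level_set[OF \<sigma> T]
  have "(\<integral>\<omega>\<in>space M. X (dyadic_ceiling T n (\<sigma> \<omega>)) \<omega> \<partial>M) \<le> (\<integral>\<omega>\<in>space M. X T \<omega> \<partial>M)"
    by (rule set_integral_dyadic_sampling_le[OF \<sigma> T level])
      (simp_all add: martingale_set_integral_eq[OF X] int_X int_X[OF T_in])
  moreover have "(\<integral>\<omega>\<in>space M. - X (dyadic_ceiling T n (\<sigma> \<omega>)) \<omega> \<partial>M) \<le> (\<integral>\<omega>\<in>space M. - X T \<omega> \<partial>M)"
  proof (rule set_integral_dyadic_sampling_le[OF \<sigma> T level])
    show "(\<integral>\<omega>\<in>C. - X s \<omega> \<partial>M) \<le> (\<integral>\<omega>\<in>C. - X T \<omega> \<partial>M)" if "s \<in> {0..T}" "C \<in> sets (F s)" for s C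
      using martingale_set_integral_eq[OF X that] by (simp add: set_lebesgue_integral_def)
  qed (simp_all add: int_X int_X[OF T_in])
  ultimately show ?thesis
    using int_sampled int_X[OF T_in] by (simp add: set_integral_space)
qed

lemma uniformly_integrable_dyadic_sampling:
  assumes X: "martingale_on M F T X" and \<sigma>: "stopping_time_on M F T \<sigma>" and T: "0 < T"
  shows "uniformly_integrable M (\<lambda>n \<omega>. X (dyadic_ceiling T n (\<sigma> \<omega>)) \<omega>)"
proof -
  have int_X: "integrable M (X s)" if "s \<in> {0..T}" for s
    using X that by (simp add: martingale_on_def integrable_process_def)
  have T_in: "T \<in> {0..T}" using T by simp
  have int_sampled: "integrable M (\<lambda>\<omega>. X (dyadic_ceiling T n (\<sigma> \<omega>)) \<omega>)" for n
    using int_X by (rule integrable_dyadic_sampling[OF \<sigma> T])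
  show ?thesis
  proof (rule uniformly_integrable_if_tail_dominated[OF _ int_sampled int_X[OF T_in]])
    fix n r
    define B where "B = {\<omega>\<in>space M. r < \<bar>X (dyadic_ceiling T n (\<sigma> \<omega>)) \<omega>\<bar>}"
    have "{\<omega>\<in>B. dyadic_ceiling T n (\<sigma> \<omega>) = g} \<in> sets (F g)" if g: "g \<in> dyadic_grid T n" for g
    proof -
      have g_in: "g \<in> {0..T}" using g dyadic_grid_subset[OF less_imp_le[OF T]] by blast
      have [measurable]: "X g \<in> borel_measurable (F g)"
        using X g_in by (simp add: martingale_on_def adapted_def)
      have "{\<omega>\<in>space (F g). r < \<bar>X g \<omega>\<bar>} \<in> sets (F g)" by measurable
      moreover have "{\<omega>\<in>B. dyadic_ceiling T n (\<sigma> \<omega>) = g} =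
          {\<omega>\<in>space (F g). r < \<bar>X g \<omega>\<bar>} \<inter> {\<omega>\<in>space M. dyadic_ceiling T n (\<sigma> \<omega>) = g}"
        using space_F[OF g_in] by (auto simp: B_def)
      ultimately show ?thesis using dyadic_sampling_level_set[OF \<sigma> T g] by auto
    qed
    then have "(\<integral>\<omega>\<in>B. \<bar>X (dyadic_ceiling T n (\<sigma> \<omega>)) \<omega>\<bar> \<partial>M) \<le> (\<integral>\<omega>\<in>B. \<bar>X T \<omega>\<bar> \<partial>M)"
      by (rule set_integral_dyadic_sampling_le[OF \<sigma> T, where U = "\<lambda>s \<omega>. \<bar>X s \<omega>\<bar>"])
        (simp_all add: martingale_set_integral_abs_le[OF X] int_X integrable_abs[OF int_X[OF T_in]])
    then show "tail_integral M r (\<lambda>\<omega>. X (dyadic_ceiling T n (\<sigma> \<omega>)) \<omega>)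
        \<le> (\<integral>\<omega>\<in>{\<omega>\<in>space M. r < \<bar>X (dyadic_ceiling T n (\<sigma> \<omega>)) \<omega>\<bar>}. \<bar>X T \<omega>\<bar> \<partial>M)"
      by (simp add: tail_integral_def B_def)
  qed (simp add: finite_measure_axioms)
qed

theorem integral_optional_sampling:
  assumes X: "martingale_on M F T X" "right_continuous_paths M T X"
    and \<sigma>: "stopping_time_on M F T \<sigma>" and int_\<sigma>: "integrable M (\<lambda>\<omega>. X (\<sigma> \<omega>) \<omega>)"
  shows "(\<integral>\<omega>. X (\<sigma> \<omega>) \<omega> \<partial>M) = (\<integral>\<omega>. X T \<omega> \<partial>M)"
proof (cases "T = 0")
  case True
  then have "\<sigma> \<omega> = T" if "\<omega> \<in> space M" for \<omega>
    using stopping_time_range[OF \<sigma> that] by simp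
  then show ?thesis by (intro Bochner_Integration.integral_cong) simp_all
next
  case False
  then have T: "0 < T" using horizon_nonneg by simp
  have "(\<lambda>n. \<integral>\<omega>. X (dyadic_ceiling T n (\<sigma> \<omega>)) \<omega> \<partial>M) \<longlonglongrightarrow> (\<integral>\<omega>. X (\<sigma> \<omega>) \<omega> \<partial>M)"
  proof (rule tendsto_integral_if_uniformly_integrable[OF finite_measure_axioms _ int_\<sigma>])
    show "integrable M (\<lambda>\<omega>. X (dyadic_ceiling T n (\<sigma> \<omega>)) \<omega>)" for n
      by (rule integrable_dyadic_sampling[OF \<sigma> T])
        (use X(1) in \<open>simp add: martingale_on_def integrable_process_def\<close>)
    show "(\<lambda>n. X (dyadic_ceiling T n (\<sigma> \<omega>)) \<omega>) \<longlonglongrightarrow> X (\<sigma> \<omega>) \<omega>" if "\<omega> \<in> space M" for \<omega>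
      using dyadic_sampling_tendsto[OF X(2) that T] stopping_time_range[OF \<sigma> that] by simp
  qed (rule uniformly_integrable_dyadic_sampling[OF X(1) \<sigma> T])
  then show ?thesis
    unfolding integral_dyadic_sampling_martingale[OF X(1) \<sigma> T] by (simp add: LIMSEQ_const_iff)
qed

lemma stopping_time_on_switch:
  assumes \<theta>: "stopping_time_on M F T \<theta>" and t: "t \<in> {0..T}" and A: "A \<in> sets (F t)"
  shows "stopping_time_on M F T (\<lambda>\<omega>. if \<omega> \<in> A then max (\<theta> \<omega>) t else T)"
  unfolding stopping_time_on_def
proof (intro conjI ballI)
  fix \<omega> assume "\<omega> \<in> space M"
  then show "(if \<omega> \<in> A then max (\<theta> \<omega>) t else T) \<in> {0..T}"
    using stopping_time_range[OF \<theta>] t horizon_nonneg by auto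
next
  fix s assume s: "s \<in> {0..T}"
  show "{\<omega>\<in>space M. (if \<omega> \<in> A then max (\<theta> \<omega>) t else T) \<le> s} \<in> sets (F s)"
  proof (cases "t \<le> s")
    case True
    have "A \<in> sets (F s)" using sets_F_mono[of t s] A t s True by auto
    moreover have "{\<omega>\<in>space M. \<theta> \<omega> \<le> s} \<in> sets (F s)"
      using \<theta> s by (simp add: stopping_time_on_def)
    moreover have "space M - A \<in> sets (F s)"
      using \<open>A \<in> sets (F s)\<close> space_F[OF s] by (metis sets.compl_sets)
    moreover have "{\<omega>\<in>space M. (if \<omega> \<in> A then max (\<theta> \<omega>) t else T) \<le> s} =
        (A \<inter> {\<omega>\<in>space M. \<theta> \<omega> \<le> s}) \<union> (if T \<le> s then space M - A else {})"
      using True sets.sets_into_space[OF \<open>A \<in> sets (F s)\<close>] space_F[OF s] by auto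
    ultimately show ?thesis by auto
  next
    case False
    then have "{\<omega>\<in>space M. (if \<omega> \<in> A then max (\<theta> \<omega>) t else T) \<le> s} = {}"
      using t by auto
    then show ?thesis by (metis sets.empty_sets)
  qed
qed

text \<open>On \<open>A \<in> F t\<close> stop at \<open>max \<theta> t\<close>, elsewhere at \<open>T\<close>: optional sampling for this stopping
  time says precisely that the increment of the stopped martingale over \<open>[t, T]\<close> integrates to
  zero over \<open>A\<close>.\<close>

lemma set_integral_stopped_increment:
  assumes X: "martingale_on M F T X" "right_continuous_paths M T X"
    and \<theta>: "stopping_time_on M F T \<theta>" and int: "integrable_process M T (stopped \<theta> X)"
    and t: "t \<in> {0..T}" and A: "A \<in> sets (F t)"
  shows "(\<integral>\<omega>\<in>A. X (min T (\<theta> \<omega>)) \<omega> - X (min t (\<theta> \<omega>)) \<omega> \<partial>M) = 0"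
proof -
  have T_in: "T \<in> {0..T}" using t by auto
  have int_X: "integrable M (X s)" if "s \<in> {0..T}" for s
    using X(1) that by (simp add: martingale_on_def integrable_process_def)
  have A_M: "A \<in> sets M" using A sets_F_subset[OF t] by blast
  define g where "g = (\<lambda>\<omega>. X (min T (\<theta> \<omega>)) \<omega> - X (min t (\<theta> \<omega>)) \<omega> + X t \<omega> - X T \<omega>)"
  have "integrable M g"
    using int t T_in int_X[OF t] int_X[OF T_in] by (simp add: g_def integrable_process_def stopped_def)
  then have int_g: "integrable M (\<lambda>\<omega>. indicator A \<omega> * g \<omega>)"
    using integrable_mult_indicator[OF A_M, of g] by simp
  define \<rho> where "\<rho> \<omega> = (if \<omega> \<in> A then max (\<theta> \<omega>) t else T)" for \<omega>
  have switch: "X (\<rho> \<omega>) \<omega> = X T \<omega> + indicator A \<omega> * g \<omega>" if "\<omega> \<in> space M" for \<omega>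
    using stopping_time_range[OF \<theta> that] t unfolding \<rho>_def g_def
    by (auto simp: max_def min_def split: split_indicator)
  have "integrable M (\<lambda>\<omega>. X (\<rho> \<omega>) \<omega>) \<longleftrightarrow> integrable M (\<lambda>\<omega>. X T \<omega> + indicator A \<omega> * g \<omega>)"
    by (intro Bochner_Integration.integrable_cong) (simp_all add: switch)
  then have int_\<rho>: "integrable M (\<lambda>\<omega>. X (\<rho> \<omega>) \<omega>)"
    using int_g int_X[OF T_in] by simp
  have "(\<integral>\<omega>. X T \<omega> \<partial>M) = (\<integral>\<omega>. X (\<rho> \<omega>) \<omega> \<partial>M)"
    using stopping_time_on_switch[OF \<theta> t A] unfolding \<rho>_def[abs_def]
    by (rule integral_optional_sampling[symmetric, OF X _ int_\<rho>[unfolded \<rho>_def]])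
  also have "\<dots> = (\<integral>\<omega>. X T \<omega> + indicator A \<omega> * g \<omega> \<partial>M)"
    by (intro Bochner_Integration.integral_cong) (simp_all add: switch)
  also have "\<dots> = (\<integral>\<omega>. X T \<omega> \<partial>M) + (\<integral>\<omega>\<in>A. g \<omega> \<partial>M)"
    using int_g int_X[OF T_in] by (simp add: set_lebesgue_integral_def)
  finally have "(\<integral>\<omega>\<in>A. g \<omega> \<partial>M) = 0" by simp
  moreover have "(\<integral>\<omega>\<in>A. g \<omega> \<partial>M) = (\<integral>\<omega>\<in>A. X (min T (\<theta> \<omega>)) \<omega> - X (min t (\<theta> \<omega>)) \<omega> \<partial>M)"
  proof -
    have set_int: "set_integrable M A f" if "integrable M f" for f :: "'a \<Rightarrow> real"
      using integrable_mult_indicator[OF A_M that] by (simp add: set_integrable_def)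
    have "integrable M (\<lambda>\<omega>. X (min T (\<theta> \<omega>)) \<omega> - X (min t (\<theta> \<omega>)) \<omega>)"
      using int t T_in by (simp add: integrable_process_def stopped_def)
    then show ?thesis
      using martingale_set_integral_eq[OF X(1) t A] set_int int_X[OF t] int_X[OF T_in]
      by (simp add: g_def)
  qed
  ultimately show ?thesis by simp
qed

lemma va_stopped_martingale:
  assumes X: "martingale_on M F T X" "right_continuous_paths M T X"
    and \<theta>: "stopping_time_on M F T \<theta>" and int: "integrable_process M T (stopped \<theta> X)"
    and t: "t \<in> {0..T}"
  shows "AE \<omega> in M. va M F T (stopped \<theta> X) t \<omega> = 0"
proof -
  interpret sigma_finite_subalgebra M "F t" using sigma_finite_subalgebra_F[OF t] .
  have "AE \<omega> in M. real_cond_exp M (F t) (\<lambda>\<omega>. X (min T (\<theta> \<omega>)) \<omega> - X (min t (\<theta> \<omega>)) \<omega>) \<omega> = 0"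
    using set_integral_stopped_increment[OF X \<theta> int t] int t
    by (intro real_cond_exp_charact) (auto simp: integrable_process_def stopped_def)
  then show ?thesis
    by (simp add: va_def stopped_def)
qed

section \<open>Fair values of stopped martingales\<close>

lemma va_diff:
  assumes "t \<in> {0..T}" and "integrable M (X t)" "integrable M (X T)"
    and "integrable M (Y t)" "integrable M (Y T)"
  shows "AE \<omega> in M. va M F T (\<lambda>s \<omega>. X s \<omega> - Y s \<omega>) t \<omega> = va M F T X t \<omega> - va M F T Y t \<omega>"
proof -
  interpret sigma_finite_subalgebra M "F t" using sigma_finite_subalgebra_F[OF assms(1)] .
  have "(\<lambda>\<omega>. (X T \<omega> - Y T \<omega>) - (X t \<omega> - Y t \<omega>)) = (\<lambda>\<omega>. (X T \<omega> - X t \<omega>) - (Y T \<omega> - Y t \<omega>))"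
    by (simp add: algebra_simps)
  then show ?thesis
    using real_cond_exp_diff[of "\<lambda>\<omega>. X T \<omega> - X t \<omega>" "\<lambda>\<omega>. Y T \<omega> - Y t \<omega>"] assms(2-5)
    by (simp add: va_def)
qed

lemma va_minus_stopped_martingales:
  assumes Y: "martingale_on M F T Y" "right_continuous_paths M T Y"
    and W: "martingale_on M F T W" "right_continuous_paths M T W"
    and \<theta>: "stopping_time_on M F T \<theta>"
    and int: "integrable_process M T (stopped \<theta> Y)" "integrable_process M T (stopped \<theta> W)"
    and Z: "integrable M (Z t)" "integrable M (Z T)" and t: "t \<in> {0..T}"
  shows "AE \<omega> in M.
    - va M F T Z t \<omega> = va M F T (\<lambda>s \<omega>. stopped \<theta> Y s \<omega> - stopped \<theta> W s \<omega> - Z s \<omega>) t \<omega>"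
proof -
  have T_in: "T \<in> {0..T}" using t by simp
  have "integrable M (stopped \<theta> Y s)" "integrable M (stopped \<theta> W s)" if "s \<in> {0..T}" for s
    using int that by (simp_all add: integrable_process_def)
  then show ?thesis
    using va_diff[of t "\<lambda>s \<omega>. stopped \<theta> Y s \<omega> - stopped \<theta> W s \<omega>" Z]
      va_diff[of t "stopped \<theta> Y" "stopped \<theta> W"]
      va_stopped_martingale[OF Y \<theta> int(1) t] va_stopped_martingale[OF W \<theta> int(2) t] Z t T_in
    by auto
qed

lemma fair_value_set_integral:
  assumes "is_fair_value M F T Y P" "adapted F T P" "integrable_process M T Y"
    and s: "s \<in> {0..T}" and C: "C \<in> sets (F s)"
  shows "(\<integral>\<omega>\<in>C. P s \<omega> \<partial>M) = (\<integral>\<omega>\<in>C. Y T \<omega> - Y s \<omega> \<partial>M)"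
proof -
  interpret sigma_finite_subalgebra M "F s" using sigma_finite_subalgebra_F[OF s] .
  have T: "T \<in> {0..T}" using s by auto
  have [measurable]: "P s \<in> borel_measurable M"
    using assms(2) s by (intro borel_measurable_if_F[OF s]) (simp add: adapted_def)
  have [measurable]: "C \<in> sets M"
    using C sets_F_subset[OF s] by blast
  have [measurable]: "integrable M (\<lambda>\<omega>. Y T \<omega> - Y s \<omega>)"
    using assms(3) s T by (simp add: integrable_process_def)
  have "AE \<omega> in M. P s \<omega> = real_cond_exp M (F s) (\<lambda>\<omega>. Y T \<omega> - Y s \<omega>) \<omega>"
    using assms(1) s by (simp add: is_fair_value_def va_def)
  then have "(\<integral>\<omega>\<in>C. P s \<omega> \<partial>M) = (\<integral>\<omega>\<in>C. real_cond_exp M (F s) (\<lambda>\<omega>. Y T \<omega> - Y s \<omega>) \<omega> \<partial>M)"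
    by (intro set_lebesgue_integral_cong_AE) (auto intro: borel_measurable_cond_exp2)
  moreover have "(\<integral>\<omega>\<in>C. Y T \<omega> - Y s \<omega> \<partial>M) = (\<integral>\<omega>\<in>C. real_cond_exp M (F s) (\<lambda>\<omega>. Y T \<omega> - Y s \<omega>) \<omega> \<partial>M)"
    using \<open>integrable M (\<lambda>\<omega>. Y T \<omega> - Y s \<omega>)\<close> assms(5) by (rule real_cond_exp_intA)
  ultimately show ?thesis by simp
qed

lemma fair_value_martingale:
  assumes Y: "adapted F T Y" "integrable_process M T Y"
    and P: "adapted F T P" "integrable_process M T P" and fair: "is_fair_value M F T Y P"
  shows "martingale_on M F T (\<lambda>t \<omega>. Y t \<omega> + P t \<omega>)"
proof (rule martingale_onI_set_integral)
  show "adapted F T (\<lambda>t \<omega>. Y t \<omega> + P t \<omega>)"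
    using Y(1) P(1) by (simp add: adapted_def borel_measurable_add)
  show "integrable_process M T (\<lambda>t \<omega>. Y t \<omega> + P t \<omega>)"
    using Y(2) P(2) by (simp add: integrable_process_def)
  fix s C assume s: "s \<in> {0..T}" and C: "C \<in> sets (F s)"
  have T: "T \<in> {0..T}" and CT: "C \<in> sets (F T)"
    using s C sets_F_mono[of s T] by auto
  have set_int: "set_integrable M C (X u)" if "integrable_process M T X" "u \<in> {0..T}" for X u
    using integrable_mult_indicator[of C M "X u"] C sets_F_subset[OF s] that
    by (auto simp: set_integrable_def integrable_process_def)
  have "(\<integral>\<omega>\<in>C. Y s \<omega> + P s \<omega> \<partial>M) = (\<integral>\<omega>\<in>C. Y T \<omega> \<partial>M)"
    using fair_value_set_integral[OF fair P(1) Y(2) s C] set_int[OF Y(2)] set_int[OF P(2)] s T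
    by simp
  also have "\<dots> = (\<integral>\<omega>\<in>C. Y T \<omega> + P T \<omega> \<partial>M)"
    using fair_value_set_integral[OF fair P(1) Y(2) T CT] set_int[OF Y(2)] set_int[OF P(2)] T
    by simp
  finally show "(\<integral>\<omega>\<in>C. Y s \<omega> + P s \<omega> \<partial>M) = (\<integral>\<omega>\<in>C. Y T \<omega> + P T \<omega> \<partial>M)" .
qed

lemma integrable_pnl:
  assumes \<tau>s: "stopping_time_on M F T \<tau>s" and \<theta>: "stopping_time_on M F T \<theta>"
    and int: "\<forall>X\<in>{CQ, Q, CP, P, q, p, h}. integrable_process M T X \<and> integrable_process M T (stopped \<theta> X)"
    and s: "s \<in> {0..T}"
  shows "integrable M (pnl \<tau>s \<theta> CQ Q CP P q p h s)"
proof -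
  have [measurable]: "\<theta> \<in> borel_measurable M" "\<tau>s \<in> borel_measurable M"
    using \<theta> \<tau>s by (simp_all add: stopping_time_measurable)
  have int_stopped: "integrable M (\<lambda>\<omega>. X (min u (\<theta> \<omega>)) \<omega>)"
    if "X \<in> {CQ, Q, CP, P, q, p, h}" "u \<in> {0..T}" for X u
    using int that by (auto simp: integrable_process_def stopped_def)
  have int_\<theta>: "integrable M (\<lambda>\<omega>. X (\<theta> \<omega>) \<omega>)" if "X \<in> {CQ, Q, CP, P, q, p, h}" for X
  proof -
    have "integrable M (\<lambda>\<omega>. X (min T (\<theta> \<omega>)) \<omega>) \<longleftrightarrow> integrable M (\<lambda>\<omega>. X (\<theta> \<omega>) \<omega>)"
      using stopping_time_range[OF \<theta>]
      by (intro Bochner_Integration.integrable_cong) (simp_all add: min_absorb2)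
    then show ?thesis using int_stopped[OF that] horizon_nonneg by simp
  qed
  have int_h: "integrable M (h s)"
    using int s by (simp add: integrable_process_def)
  have "0 \<in> {0..T}" using horizon_nonneg by simp
  note ints = int_stopped[OF _ s] int_stopped[OF _ this] int_\<theta>
  show ?thesis
    unfolding pnl_def Let_def from0_def stopped_def ind_before_def
    by (intro Bochner_Integration.integrable_diff Bochner_Integration.integrable_add integrable_bounded_mult
        ints[of CQ] ints[of Q] ints[of CP] ints[of P] ints[of q] ints[of p] int_h)
      (simp_all, measurable)
qed

end


theorem lemma3p1:
  fixes M :: "'a measure" and F :: "real \<Rightarrow> 'a measure" and T :: real
    and CQ Q CP P K q p h :: "real \<Rightarrow> 'a \<Rightarrow> real"
    and \<tau>s \<theta> :: "'a \<Rightarrow> real"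
  assumes "prob_space M" and "0 \<le> T"
    and "filtration_usual M F T"
    and "cash_flow M F T CQ"
    and "adapted F T Q" and "cadlag M T Q" and "integrable_process M T Q"
    and "is_callable_value M F T CQ Q"
    and "is_drift M F T (\<lambda>t \<omega>. CQ t \<omega> + Q t \<omega>) K"
    and "cash_flow M F T CP"
    and "adapted F T P" and "cadlag M T P" and "integrable_process M T P"
    and "is_fair_value M F T CP P"
    and "semimartingale_on M F T q" and "semimartingale_on M F T p"
    and "\<forall>\<omega>\<in>space M. q T \<omega> = 0"
    and "stopping_time_on M F T \<tau>s" and "stopping_time_on M F T \<theta>"
    and "martingale_on M F T h" and "cadlag M T h"
    and "\<forall>t\<in>{0..T}. \<forall>\<omega>\<in>space M. h t \<omega> = stopped \<theta> h t \<omega>"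
    \<comment> \<open>integrability needed for the conditional expectations to exist\<close>
    and "\<forall>X\<in>{CQ, Q, CP, P, K, q, p, h}. integrable_process M T X \<and> integrable_process M T (stopped \<theta> X)"
    and "\<forall>\<tau>. stopping_time_on M F T \<tau> \<longrightarrow> integrable M (\<lambda>\<omega>. CQ (\<tau> \<omega>) \<omega>)"
  shows "\<forall>t\<in>{0..T}. AE \<omega> in M.
           HVA M F T \<tau>s \<theta> CQ Q CP P q p h t \<omega> =
           va M F T (\<lambda>t \<omega>. from0 (stopped \<theta> (\<lambda>t \<omega>. CQ t \<omega> + Q t \<omega>)) t \<omega>
                          - from0 (stopped \<theta> (\<lambda>t \<omega>. CP t \<omega> + P t \<omega>)) t \<omega>
                          - pnl \<tau>s \<theta> CQ Q CP P q p h t \<omega>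
                          + stopped \<theta> K t \<omega>) t \<omega>"
proof -
  interpret filtered_prob_space M F T
    using assms(1-3) by (rule filtered_prob_space_if_filtration_usual)
  define Y where "Y t \<omega> = CQ t \<omega> + Q t \<omega> + K t \<omega>" for t \<omega>
  define W where "W t \<omega> = CP t \<omega> + P t \<omega>" for t \<omega>
  have Y: "martingale_on M F T Y" "right_continuous_paths M T Y"
    using assms(4,6,9)
    by (simp_all add: Y_def[abs_def] is_drift_def cash_flow_def right_continuous_paths_if_cadlag
        right_continuous_paths_add)
  have W: "martingale_on M F T W" "right_continuous_paths M T W"
    using fair_value_martingale[OF _ _ assms(11,13,14)] assms(10,12)
    by (simp_all add: W_def[abs_def] cash_flow_def right_continuous_paths_if_cadlag
        right_continuous_paths_add)
  have stopped_int: "integrable_process M T (stopped \<theta> Y)" "integrable_process M T (stopped \<theta> W)"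
    using assms(23) by (simp_all add: Y_def W_def integrable_process_def stopped_def)
  have pnl_int: "integrable M (pnl \<tau>s \<theta> CQ Q CP P q p h s)" if "s \<in> {0..T}" for s
    by (rule integrable_pnl[OF assms(18,19) _ that]) (use assms(23) in simp)
  define H where "H = (\<lambda>t \<omega>. from0 (stopped \<theta> (\<lambda>t \<omega>. CQ t \<omega> + Q t \<omega>)) t \<omega>
    - from0 (stopped \<theta> (\<lambda>t \<omega>. CP t \<omega> + P t \<omega>)) t \<omega> - pnl \<tau>s \<theta> CQ Q CP P q p h t \<omega> + stopped \<theta> K t \<omega>)"
  have va_H: "va M F T H t =
      va M F T (\<lambda>s \<omega>. stopped \<theta> Y s \<omega> - stopped \<theta> W s \<omega> - pnl \<tau>s \<theta> CQ Q CP P q p h s \<omega>) t" for t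
    by (simp add: H_def va_def from0_def stopped_def Y_def W_def algebra_simps)
  have "AE \<omega> in M. - va M F T (pnl \<tau>s \<theta> CQ Q CP P q p h) t \<omega> = va M F T H t \<omega>"
    if "t \<in> {0..T}" for t
    unfolding va_H using that
    by (intro va_minus_stopped_martingales[OF Y W assms(19) stopped_int] pnl_int) auto
  then show ?thesis
    unfolding H_def[symmetric] HVA_def by blast
qed

end
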